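(* Suppose that $q\in(0,1)$ and $d\in\mathbb N$. Then for every symmetric positive semidefinite $A,B\in M_d(\mathbb R)$, $$\mathrm{trace}\big((A+B)^qA\big)\le\mathrm{trace}(A^{q+1})+\mathrm{trace}(B^qA).$$
   Context: Powers of positive semidefinite matrices are defined by functional calculus. *)

theory Defs
  imports "HOL-Analysis.Analysis"
begin

definition diag_mat :: "real^'n \<Rightarrow> real^'n^'n" where
  "diag_mat l = (\<chi> i j. if i = j then l $ i else 0)"

definition psd :: "real^'n^'n \<Rightarrow> bool" where
  "psd A \<longleftrightarrow> transpose A = A \<and> (\<forall>x. 0 \<le> x \<bullet> (A *v x))"

text \<open>The result is independent
  of the chosen diagonalisation.\<close>
definition mat_powr :: "real^'n^'n \<Rightarrow> real \<Rightarrow> real^'n^'n" where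
  "mat_powr A q =
     (let (U, l) = (SOME (U, l). orthogonal_matrix U \<and>
                        A = U ** diag_mat l ** transpose U)
      in U ** diag_mat (\<chi> i. l $ i powr q) ** transpose U)"

end

theory Submission
  imports Defs
begin

(* For 0 < q < 1 and t >= 0 there is the integral representation
     t^q = K_q^-1 * int_0^oo s^(q-1) * t/(t+s) ds,   K_q = int_0^oo u^(q-1)/(1+u) du,
   so, diagonalising, trace (X^q A) is a positive multiple of the integral over s of
   trace (h_s(X) A) with h_s t = t/(t+s).  It therefore suffices to prove the inequality for
   each h_s, i.e. trace (h_s(A+B) A) <= trace (h_s(A) A) + trace (h_s(B) A); writing
   h_s(X) = I - s (X + sI)^-1, this follows from the resolvent identity, the bound
   s (B + sI)^-1 <= I and the operator antitonicity of inversion.  Since trace (A^(q+1)) =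
   trace (A^q A), integrating gives the theorem. *)

lemma linear_coeff_zero_if_quadratic_nonpos:
  fixes a b :: real
  assumes "\<And>t. a * t + b * t\<^sup>2 \<le> 0"
  shows "a = 0"
proof (rule ccontr)
  assume "a \<noteq> 0"
  define t where "t = a / (2 * (\<bar>b\<bar> + 1))"
  have "a * t + b * t\<^sup>2 = t * (a + b * t)" by (simp add: power2_eq_square algebra_simps)
  moreover have "0 < a * t"
    using \<open>a \<noteq> 0\<close> by (simp add: t_def zero_less_divide_iff) (smt (verit) abs_ge_zero not_real_square_gt_zero)
  moreover have "\<bar>b * t\<bar> < \<bar>a\<bar>"
  proof -
    have "\<bar>b * t\<bar> = \<bar>a\<bar> * (\<bar>b\<bar> / (2 * (\<bar>b\<bar> + 1)))" by (simp add: t_def abs_mult)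
    also have "\<dots> < \<bar>a\<bar> * 1" using \<open>a \<noteq> 0\<close> by (intro mult_strict_left_mono) auto
    finally show ?thesis by simp
  qed
  ultimately have "0 < a * t + b * t\<^sup>2"
    by (smt (verit, best) mult_less_cancel_left mult_pos_neg zero_less_mult_iff)
  with assms show False by (meson not_le)
qed

lemma inner_symmetric_matrix:
  assumes "transpose M = M"
  shows "(x::real^'n) \<bullet> (M *v y) = (M *v x) \<bullet> y"
proof -
  have "M *v x = x v* M" using vector_transpose_matrix[of x "transpose M"] assms by simp
  then show ?thesis by (simp add: dot_lmul_matrix)
qed

(* Variational characterisation: a unit vector maximising the quadratic form of a symmetric
   matrix over an invariant subspace is an eigenvector (first variation of the Rayleigh quotient). *)
lemma rayleigh_maximizer_is_eigenvector:
  fixes A :: "real^'n^'n"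
  assumes sym: "transpose A = A" and W: "subspace W" and inv: "\<And>x. x \<in> W \<Longrightarrow> A *v x \<in> W"
    and x0: "x0 \<in> W" "norm x0 = 1"
    and max: "\<And>y. y \<in> W \<Longrightarrow> norm y = 1 \<Longrightarrow> y \<bullet> (A *v y) \<le> x0 \<bullet> (A *v x0)"
  shows "A *v x0 = (x0 \<bullet> (A *v x0)) *\<^sub>R x0"
proof -
  define l where "l = x0 \<bullet> (A *v x0)"
  have bound: "y \<bullet> (A *v y) \<le> l * (y \<bullet> y)" if "y \<in> W" for y
  proof (cases "y = 0")
    case False
    have "y /\<^sub>R norm y \<in> W" using W that by (simp add: subspace_scale)
    moreover have "norm (y /\<^sub>R norm y) = 1" using False by simp
    ultimately have "(y /\<^sub>R norm y) \<bullet> (A *v (y /\<^sub>R norm y)) \<le> l"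
      unfolding l_def by (rule max)
    then have "(y \<bullet> (A *v y)) / (norm y)\<^sup>2 \<le> l"
      by (simp add: matrix_vector_mult_scaleR power2_eq_square divide_simps)
    then show ?thesis using False by (simp add: divide_le_eq dot_square_norm)
  qed simp
  define r where "r = A *v x0 - l *\<^sub>R x0"
  have r: "r \<in> W" unfolding r_def using W x0 inv by (simp add: subspace_diff subspace_scale)
  have "(2 * (r \<bullet> r)) * t + (r \<bullet> (A *v r) - l * (r \<bullet> r)) * t\<^sup>2 \<le> 0" for t
  proof -
    have x1: "x0 \<bullet> x0 = 1" using x0 by (simp add: dot_square_norm)
    have sx: "x0 \<bullet> (A *v r) = r \<bullet> (A *v x0)"
      using inner_symmetric_matrix[OF sym] by (metis inner_commute)
    have rr: "r \<bullet> r = r \<bullet> (A *v x0) - l * (r \<bullet> x0)"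
      by (simp add: r_def inner_diff_right)
    have "(x0 + t *\<^sub>R r) \<bullet> (A *v (x0 + t *\<^sub>R r)) = l + 2*t*(r \<bullet> (A *v x0)) + t\<^sup>2*(r \<bullet> (A *v r))"
      by (simp add: matrix_vector_right_distrib matrix_vector_mult_scaleR inner_add_left
          inner_add_right l_def power2_eq_square sx algebra_simps)
    moreover have "l * ((x0 + t *\<^sub>R r) \<bullet> (x0 + t *\<^sub>R r)) = l + 2*t*(l * (r \<bullet> x0)) + t\<^sup>2*(l * (r \<bullet> r))"
      by (simp add: inner_add_left inner_add_right power2_eq_square inner_commute x1 algebra_simps)
    moreover have "(x0 + t *\<^sub>R r) \<bullet> (A *v (x0 + t *\<^sub>R r)) \<le> l * ((x0 + t *\<^sub>R r) \<bullet> (x0 + t *\<^sub>R r))"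
      using bound W x0 r by (simp add: subspace_add subspace_scale)
    moreover have "(2 * (r \<bullet> r)) * t + (r \<bullet> (A *v r) - l * (r \<bullet> r)) * t\<^sup>2
        = (2*t*(r \<bullet> (A *v x0)) + t\<^sup>2*(r \<bullet> (A *v r))) - (2*t*(l * (r \<bullet> x0)) + t\<^sup>2*(l * (r \<bullet> r)))"
      unfolding rr by (simp add: algebra_simps)
    ultimately show ?thesis by linarith
  qed
  then have "2 * (r \<bullet> r) = 0" by (rule linear_coeff_zero_if_quadratic_nonpos)
  then show ?thesis by (simp add: r_def l_def)
qed

(* Every nonzero invariant subspace of a symmetric matrix contains a unit eigenvector: the
   quadratic form attains its maximum on the compact unit sphere of the subspace. *)
lemma symmetric_eigenvector_in_invariant_subspace:
  fixes A :: "real^'n^'n"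
  assumes sym: "transpose A = A" and W: "subspace W" and nontriv: "W \<noteq> {0}"
    and inv: "\<And>x. x \<in> W \<Longrightarrow> A *v x \<in> W"
  shows "\<exists>x\<in>W. norm x = 1 \<and> (\<exists>c. A *v x = c *\<^sub>R x)"
proof -
  define K where "K = sphere 0 1 \<inter> W"
  obtain z where "z \<in> W" "z \<noteq> 0" using nontriv subspace_0[OF W] by blast
  then have "z /\<^sub>R norm z \<in> K" using W by (simp add: K_def subspace_scale)
  moreover have "compact K" unfolding K_def using closed_subspace[OF W] by (simp add: compact_Int_closed)
  moreover have "continuous_on K (\<lambda>x. x \<bullet> (A *v x))"
    by (intro continuous_on_inner continuous_on_id matrix_vector_mult_linear_continuous_on)
  ultimately obtain x0 where x0: "x0 \<in> K" and max: "\<And>y. y \<in> K \<Longrightarrow> y \<bullet> (A *v y) \<le> x0 \<bullet> (A *v x0)"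
    using continuous_attains_sup[of K "\<lambda>x. x \<bullet> (A *v x)"] by blast
  have "A *v x0 = (x0 \<bullet> (A *v x0)) *\<^sub>R x0"
    using x0 max by (intro rayleigh_maximizer_is_eigenvector[OF sym W inv]) (auto simp: K_def)
  then show ?thesis using x0 by (auto simp: K_def)
qed

(* Fewer than n eigenvectors can always be complemented by a unit eigenvector orthogonal to
   all of them, since their orthogonal complement is a nonzero invariant subspace. *)
lemma symmetric_eigenvector_orthogonal_to:
  fixes A :: "real^'n^'n" and S :: "(real^'n) set"
  assumes sym: "transpose A = A" and S: "finite S" "card S < CARD('n)"
    and eig: "\<And>v. v \<in> S \<Longrightarrow> \<exists>c. A *v v = c *\<^sub>R v"
  shows "\<exists>x. norm x = 1 \<and> (\<forall>v\<in>S. orthogonal v x) \<and> (\<exists>c. A *v x = c *\<^sub>R x)"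
proof -
  define W where "W = {x. \<forall>v\<in>S. orthogonal v x}"
  have "subspace W" unfolding W_def by (rule subspace_orthogonal_to_vectors)
  moreover have "W \<noteq> {0}"
  proof -
    have "dim S < DIM(real^'n)" using dim_le_card'[OF S(1)] S(2) by simp
    then obtain z where "z \<noteq> 0" "\<And>y. y \<in> span S \<Longrightarrow> orthogonal z y"
      using orthogonal_to_subspace_exists by blast
    then have "z \<in> W" unfolding W_def using span_base orthogonal_commute by blast
    with \<open>z \<noteq> 0\<close> show ?thesis by blast
  qed
  moreover have "A *v x \<in> W" if "x \<in> W" for x
  proof -
    have "orthogonal v (A *v x)" if "v \<in> S" for v
    proof -
      obtain c where "A *v v = c *\<^sub>R v" using eig \<open>v \<in> S\<close> by blast
      then have "v \<bullet> (A *v x) = c * (v \<bullet> x)" by (simp add: inner_symmetric_matrix[OF sym])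
      then show ?thesis using \<open>x \<in> W\<close> \<open>v \<in> S\<close> by (simp add: W_def orthogonal_def)
    qed
    then show ?thesis by (simp add: W_def)
  qed
  ultimately obtain x where "x \<in> W" "norm x = 1" "\<exists>c. A *v x = c *\<^sub>R x"
    using symmetric_eigenvector_in_invariant_subspace[OF sym] by blast
  then show ?thesis unfolding W_def by blast
qed

lemma symmetric_orthonormal_eigenvectors:
  fixes A :: "real^'n^'n"
  assumes sym: "transpose A = A" and "k \<le> CARD('n)"
  shows "\<exists>S. finite S \<and> card S = k \<and> pairwise orthogonal S \<and>
              (\<forall>x\<in>S. norm x = 1 \<and> (\<exists>c. A *v x = c *\<^sub>R x))"
  using \<open>k \<le> CARD('n)\<close>
proof (induction k)
  case 0
  show ?case by (intro exI[of _ "{}"]) auto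
next
  case (Suc k)
  then obtain S where S: "finite S" "card S = k" "pairwise orthogonal S"
    "\<forall>x\<in>S. norm x = 1 \<and> (\<exists>c. A *v x = c *\<^sub>R x)" by auto
  then obtain x where x: "norm x = 1" "\<forall>v\<in>S. orthogonal v x" "\<exists>c. A *v x = c *\<^sub>R x"
    using symmetric_eigenvector_orthogonal_to[OF sym S(1)] Suc.prems by force
  have "x \<notin> S" using x(1,2) by (auto simp: orthogonal_def)
  moreover have "pairwise orthogonal (insert x S)"
    using S(3) x(2) by (auto simp: pairwise_insert orthogonal_commute)
  ultimately show ?case using S x by (intro exI[of _ "insert x S"]) auto
qed

(* The spectral theorem for real symmetric matrices: the orthonormal eigenvectors form the
   columns of an orthogonal U with A = U diag(l) U^T. *)
theorem spectral_theorem: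
  fixes A :: "real^'n^'n"
  assumes sym: "transpose A = A"
  shows "\<exists>U l. orthogonal_matrix U \<and> A = U ** diag_mat l ** transpose U"
proof -
  obtain S where S: "finite S" "card S = CARD('n)" "pairwise orthogonal S"
    "\<forall>x\<in>S. norm x = 1 \<and> (\<exists>c. A *v x = c *\<^sub>R x)"
    using symmetric_orthonormal_eigenvectors[OF sym, of "CARD('n)"] by auto
  obtain f where f: "bij_betw f (UNIV::'n set) S"
    using S(1,2) by (metis finite_class.finite_UNIV finite_same_card_bij)
  have fS: "f i \<in> S" for i using f by (auto simp: bij_betw_def)
  define U where "U = (\<chi> i j. f j $ i)"
  define l where "l = (\<chi> j. SOME c. A *v f j = c *\<^sub>R f j)"
  have [simp]: "norm (f i) = 1" for i using fS S(4) by blast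
  have [simp]: "i \<noteq> j \<Longrightarrow> orthogonal (f i) (f j)" for i j
    using S(3) f by (auto simp: pairwise_def bij_betw_def inj_on_def)
  have col: "column j U = f j" for j by (simp add: U_def column_def)
  have orth: "orthogonal_matrix U"
    by (simp add: orthogonal_matrix_orthonormal_columns col)
  have ev: "A *v f j = (l $ j) *\<^sub>R f j" for j
  proof -
    have "\<exists>c. A *v f j = c *\<^sub>R f j" using fS S(4) by blast
    then have "A *v f j = (SOME c. A *v f j = c *\<^sub>R f j) *\<^sub>R f j" by (rule someI_ex)
    then show ?thesis unfolding l_def by simp
  qed
  have "(A ** U) $ i $ j = (U ** diag_mat l) $ i $ j" for i j
  proof -
    have "(A ** U) $ i $ j = (A *v f j) $ i"
      by (simp add: matrix_matrix_mult_def matrix_vector_mult_def U_def)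
    also have "\<dots> = (U ** diag_mat l) $ i $ j"
      by (simp add: ev matrix_matrix_mult_def diag_mat_def U_def if_distrib cong: if_cong)
    finally show ?thesis .
  qed
  then have "A ** U = U ** diag_mat l" by (simp add: vec_eq_iff)
  then have "A = U ** diag_mat l ** transpose U"
    using orth by (metis matrix_mul_assoc matrix_mul_rid orthogonal_matrix_def)
  then show ?thesis using orth by blast
qed

definition spectral_fun :: "real^'n^'n \<Rightarrow> real^'n \<Rightarrow> (real \<Rightarrow> real) \<Rightarrow> real^'n^'n" where
  "spectral_fun U l f = U ** diag_mat (\<chi> i. f (l $ i)) ** transpose U"

lemma spectral_fun_entry:
  "spectral_fun U l f $ i $ j = (\<Sum>k\<in>UNIV. U $ i $ k * f (l $ k) * U $ j $ k)"
  by (simp add: spectral_fun_def matrix_matrix_mult_def diag_mat_def transpose_def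
      sum_distrib_right if_distrib cong: if_cong)

lemma spectral_fun_cong: "(\<And>i. f (l $ i) = g (l $ i)) \<Longrightarrow> spectral_fun U l f = spectral_fun U l g"
  by (simp add: spectral_fun_def)

lemma spectral_fun_symmetric: "transpose (spectral_fun U l f) = spectral_fun U l f"
  by (simp add: vec_eq_iff transpose_def spectral_fun_entry mult.commute mult.left_commute)

lemma spectral_fun_add: "spectral_fun U l (\<lambda>t. f t + g t) = spectral_fun U l f + spectral_fun U l g"
  by (simp add: vec_eq_iff spectral_fun_entry algebra_simps sum.distrib)

lemma diag_mat_mult: "diag_mat (a :: real^'n) ** diag_mat b = diag_mat (\<chi> i. a $ i * b $ i)"
proof -
  have "(\<Sum>k\<in>UNIV. (if i = k then a $ i else 0) * (if k = j then b $ k else 0))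
      = (\<Sum>k\<in>UNIV. if k = i then (if i = j then a $ i * b $ i else 0) else 0)" for i j :: 'n
    by (intro sum.cong) auto
  then show ?thesis by (simp add: vec_eq_iff matrix_matrix_mult_def diag_mat_def)
qed

lemma spectral_fun_mult:
  assumes "orthogonal_matrix U"
  shows "spectral_fun U l f ** spectral_fun U l g = spectral_fun U l (\<lambda>t. f t * g t)"
proof -
  have "spectral_fun U l f ** spectral_fun U l g
      = U ** diag_mat (\<chi> i. f (l $ i)) ** (transpose U ** U) ** diag_mat (\<chi> i. g (l $ i)) ** transpose U"
    by (simp add: spectral_fun_def matrix_mul_assoc)
  also have "\<dots> = U ** (diag_mat (\<chi> i. f (l $ i)) ** diag_mat (\<chi> i. g (l $ i))) ** transpose U"
    using assms by (simp add: orthogonal_matrix_def matrix_mul_assoc)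
  finally show ?thesis by (simp add: diag_mat_mult spectral_fun_def)
qed

lemma spectral_fun_const:
  fixes U :: "real^'n^'n"
  assumes "orthogonal_matrix U"
  shows "spectral_fun U l (\<lambda>t. c) = mat c"
proof -
  have "diag_mat (\<chi> i. c) = (mat c :: real^'n^'n)" by (simp add: diag_mat_def mat_def vec_eq_iff)
  then have "spectral_fun U l (\<lambda>t. c) = U ** mat c ** transpose U" by (simp add: spectral_fun_def)
  also have "\<dots> = c *\<^sub>R (U ** transpose U)"
    by (simp add: vec_eq_iff matrix_matrix_mult_def mat_def if_distrib sum_distrib_left
        mult.commute mult.left_commute cong: if_cong)
  also have "\<dots> = mat c" using assms by (simp add: orthogonal_matrix_def vec_eq_iff mat_def)
  finally show ?thesis .
qed

lemma spectral_fun_trace: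
  "trace (spectral_fun U l f ** M) = (\<Sum>k\<in>UNIV. f (l $ k) * (column k U \<bullet> (M *v column k U)))"
proof -
  have "trace (spectral_fun U l f ** M)
      = (\<Sum>i\<in>UNIV. \<Sum>j\<in>UNIV. \<Sum>k\<in>UNIV. U $ i $ k * f (l $ k) * U $ j $ k * M $ j $ i)"
    by (simp add: trace_def matrix_matrix_mult_def spectral_fun_entry sum_distrib_right)
  also have "\<dots> = (\<Sum>k\<in>UNIV. \<Sum>j\<in>UNIV. \<Sum>i\<in>UNIV. U $ i $ k * f (l $ k) * U $ j $ k * M $ j $ i)"
    by (subst sum.swap, subst (2) sum.swap, rule sum.cong[OF refl], subst sum.swap, rule refl)
  also have "\<dots> = (\<Sum>k\<in>UNIV. f (l $ k) * (column k U \<bullet> (M *v column k U)))"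
    by (simp add: column_def inner_vec_def matrix_vector_mult_def sum_distrib_left sum_distrib_right
        mult.commute mult.left_commute)
  finally show ?thesis .
qed

lemma spectral_fun_quadratic_form:
  "y \<bullet> (spectral_fun U l f *v y) = (\<Sum>k\<in>UNIV. f (l $ k) * (column k U \<bullet> y)\<^sup>2)"
proof -
  have "y \<bullet> (spectral_fun U l f *v y) = (\<Sum>i\<in>UNIV. \<Sum>j\<in>UNIV. \<Sum>k\<in>UNIV. y $ i * U $ i $ k * f (l $ k) * U $ j $ k * y $ j)"
    by (simp add: inner_vec_def matrix_vector_mult_def spectral_fun_entry sum_distrib_left sum_distrib_right
        mult.assoc)
  also have "\<dots> = (\<Sum>k\<in>UNIV. \<Sum>i\<in>UNIV. \<Sum>j\<in>UNIV. y $ i * U $ i $ k * f (l $ k) * U $ j $ k * y $ j)"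
    by (subst sum.swap, subst (2) sum.swap, rule refl)
  also have "\<dots> = (\<Sum>k\<in>UNIV. f (l $ k) * (column k U \<bullet> y)\<^sup>2)"
    by (simp add: column_def inner_vec_def power2_eq_square sum_distrib_left sum_distrib_right
        sum_product mult.commute mult.left_commute)
  finally show ?thesis .
qed

lemma orthogonal_matrix_sum_squares:
  fixes U :: "real^'n^'n" and y :: "real^'n"
  assumes "orthogonal_matrix U"
  shows "(\<Sum>k\<in>UNIV. (column k U \<bullet> y)\<^sup>2) = y \<bullet> y"
  using spectral_fun_quadratic_form[of y U l "\<lambda>t. 1"] spectral_fun_const[OF assms, of l 1] by simp

lemma spectral_fun_quadratic_form_le:
  fixes U :: "real^'n^'n"
  assumes "orthogonal_matrix U" and "\<And>k. f (l $ k) \<le> c"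
  shows "y \<bullet> (spectral_fun U l f *v y) \<le> c * (y \<bullet> y)"
proof -
  have "y \<bullet> (spectral_fun U l f *v y) \<le> (\<Sum>k\<in>UNIV. c * (column k U \<bullet> y)\<^sup>2)"
    unfolding spectral_fun_quadratic_form using assms(2) by (intro sum_mono mult_right_mono) auto
  also have "\<dots> = c * (y \<bullet> y)"
    by (simp add: sum_distrib_left[symmetric] orthogonal_matrix_sum_squares[OF assms(1)])
  finally show ?thesis .
qed

lemma spectral_fun_psd: "(\<And>k. 0 \<le> f (l $ k)) \<Longrightarrow> psd (spectral_fun U l f)"
  unfolding psd_def spectral_fun_quadratic_form
  by (simp add: spectral_fun_symmetric sum_nonneg)

lemma psd_spectral_values_nonneg:
  fixes U :: "real^'n^'n"
  assumes "orthogonal_matrix U" and "psd (spectral_fun U l (\<lambda>t. t))"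
  shows "0 \<le> l $ k"
proof -
  have col: "column j U \<bullet> column k U = (if j = k then 1 else 0)" for j
    using assms(1) unfolding orthogonal_matrix_orthonormal_columns
    by (auto simp: orthogonal_def norm_eq_1)
  have "0 \<le> column k U \<bullet> (spectral_fun U l (\<lambda>t. t) *v column k U)"
    using assms(2) by (simp add: psd_def)
  also have "\<dots> = (\<Sum>j\<in>UNIV. if j = k then l $ k else 0)"
    unfolding spectral_fun_quadratic_form by (intro sum.cong) (simp_all add: col)
  also have "\<dots> = l $ k" by simp
  finally show ?thesis .
qed

(* Intrinsic functional calculus f(A), using the same choice of diagonalisation as mat_powr,
   so that mat_powr A q = f(A) for f t = t powr q. *)
definition mat_fun :: "(real \<Rightarrow> real) \<Rightarrow> real^'n^'n \<Rightarrow> real^'n^'n" where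
  "mat_fun f A =
     (let (U, l) = (SOME (U, l). orthogonal_matrix U \<and> A = U ** diag_mat l ** transpose U)
      in spectral_fun U l f)"

lemma mat_powr_eq_mat_fun: "mat_powr A q = mat_fun (\<lambda>t. t powr q) A"
  by (simp add: mat_powr_def mat_fun_def spectral_fun_def)

lemma psd_spectral_decomposition:
  fixes A :: "real^'n^'n"
  assumes "psd A"
  obtains U l where "orthogonal_matrix U" and "\<And>i. 0 \<le> l $ i"
    and "A = spectral_fun U l (\<lambda>t. t)" and "\<And>f. mat_fun f A = spectral_fun U l f"
proof -
  define P where "P = (\<lambda>(U :: real^'n^'n, l :: real^'n). orthogonal_matrix U \<and> A = U ** diag_mat l ** transpose U)"
  have "\<exists>p. P p" using spectral_theorem[of A] assms by (auto simp: psd_def P_def)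
  then have "P (SOME p. P p)" by (rule someI_ex)
  moreover obtain U l where Ul: "(SOME p. P p) = (U, l)" by fastforce
  ultimately have U: "orthogonal_matrix U" and A: "A = spectral_fun U l (\<lambda>t. t)"
    by (auto simp: P_def spectral_fun_def vec_lambda_eta)
  moreover have "mat_fun f A = spectral_fun U l f" for f
    unfolding mat_fun_def P_def[symmetric] Ul by simp
  moreover have "0 \<le> l $ i" for i using psd_spectral_values_nonneg[OF U] A assms by metis
  ultimately show ?thesis using that by blast
qed

lemma psd_add:
  assumes "psd A" and "psd B"
  shows "psd (A + B)"
proof -
  have "transpose (A + B) = transpose A + transpose B" by (simp add: vec_eq_iff transpose_def)
  then show ?thesis using assms
    unfolding psd_def by (simp add: matrix_vector_mult_add_rdistrib inner_add_right add_nonneg_nonneg)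
qed

lemma psd_mat:
  assumes "0 \<le> c"
  shows "psd (mat c :: real^'n^'n)"
proof -
  have "mat c *v x = c *\<^sub>R x" for x :: "real^'n"
  proof -
    have "(\<Sum>j\<in>UNIV. (if i = j then c else 0) * x $ j) = c * x $ i" for i
      by (simp add: if_distrib[of "\<lambda>a. a * _"] cong: if_cong)
    then show ?thesis by (simp add: vec_eq_iff matrix_vector_mult_def mat_def)
  qed
  then show ?thesis using assms by (simp add: psd_def)
qed

lemma psd_square:
  fixes A :: "real^'n^'n"
  assumes "psd A"
  shows "psd (A ** A)"
proof -
  have sym: "transpose A = A" using assms by (simp add: psd_def)
  have "x \<bullet> ((A ** A) *v x) = (A *v x) \<bullet> (A *v x)" for x
    by (simp add: matrix_vector_mul_assoc[symmetric] inner_symmetric_matrix[OF sym])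
  then show ?thesis by (simp add: psd_def matrix_transpose_mul sym)
qed

lemma mat_fun_psd:
  assumes "psd A" and "\<And>t. 0 \<le> t \<Longrightarrow> 0 \<le> f t"
  shows "psd (mat_fun f A)"
proof -
  obtain U l where "\<And>i. 0 \<le> l $ i" and "mat_fun f A = spectral_fun U l f"
    using psd_spectral_decomposition[OF assms(1)] by metis
  then show ?thesis using assms(2) by (simp add: spectral_fun_psd)
qed

lemma mat_powr_add_one:
  assumes "psd A"
  shows "mat_powr A (q + 1) = mat_powr A q ** A"
proof -
  obtain U l where U: "orthogonal_matrix U" and l: "\<And>i. 0 \<le> l $ i"
    and A: "A = spectral_fun U l (\<lambda>t. t)" and f: "\<And>f. mat_fun f A = spectral_fun U l f"
    using psd_spectral_decomposition[OF assms] by metis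
  have "a powr (q + 1) = a powr q * a" if "0 \<le> a" for a :: real
    using that by (simp add: powr_add)
  then have "spectral_fun U l (\<lambda>t. t powr (q + 1)) = spectral_fun U l (\<lambda>t. t powr q * t)"
    using l by (intro spectral_fun_cong) blast
  also have "\<dots> = spectral_fun U l (\<lambda>t. t powr q) ** A"
    by (simp add: A spectral_fun_mult[OF U])
  finally show ?thesis by (simp add: mat_powr_eq_mat_fun f)
qed

lemma trace_mat_fun_expansion:
  fixes A M :: "real^'n^'n"
  assumes "psd A" and "psd M"
  shows "\<exists>l g :: 'n \<Rightarrow> real. (\<forall>k. 0 \<le> l k \<and> 0 \<le> g k) \<and>
           (\<forall>f. trace (mat_fun f A ** M) = (\<Sum>k\<in>UNIV. f (l k) * g k))"
proof -
  obtain U l where "\<And>i. 0 \<le> l $ i" and "\<And>f. mat_fun f A = spectral_fun U l f"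
    using psd_spectral_decomposition[OF assms(1)] by metis
  moreover have "\<And>k. 0 \<le> column k U \<bullet> (M *v column k U)" using assms(2) by (simp add: psd_def)
  ultimately show ?thesis
    by (intro exI[of _ "\<lambda>k. l $ k"] exI[of _ "\<lambda>k. column k U \<bullet> (M *v column k U)"])
      (simp add: spectral_fun_trace)
qed

lemma trace_mono_right:
  fixes R M N :: "real^'n^'n"
  assumes "psd R" and "\<And>x. c * (x \<bullet> (M *v x)) \<le> x \<bullet> (N *v x)"
  shows "c * trace (R ** M) \<le> trace (R ** N)"
proof -
  obtain U l where l: "\<And>i. 0 \<le> l $ i" and R: "R = spectral_fun U l (\<lambda>t. t)"
    using psd_spectral_decomposition[OF assms(1)] by metis
  have "c * trace (R ** M) = (\<Sum>k\<in>UNIV. l $ k * (c * (column k U \<bullet> (M *v column k U))))"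
    by (simp add: R spectral_fun_trace sum_distrib_left mult.left_commute)
  also have "\<dots> \<le> trace (R ** N)"
    unfolding R spectral_fun_trace using l assms(2) by (intro sum_mono mult_left_mono) auto
  finally show ?thesis .
qed

lemma trace_psd_nonneg: "psd R \<Longrightarrow> psd M \<Longrightarrow> 0 \<le> trace (R ** M)"
  using trace_mono_right[of R 1 0 M] by (simp add: psd_def trace_def)

lemma trace_mat_fun_nonneg:
  assumes "psd X" and "psd M" and "\<And>t. 0 \<le> t \<Longrightarrow> 0 \<le> f t"
  shows "0 \<le> trace (mat_fun f X ** M)"
  using assms by (intro trace_psd_nonneg mat_fun_psd)

lemma trace_mono_left:
  fixes R R' M :: "real^'n^'n"
  assumes "psd M" and "\<And>x. x \<bullet> (R *v x) \<le> x \<bullet> (R' *v x)"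
  shows "trace (R ** M) \<le> trace (R' ** M)"
  using trace_mono_right[of M 1 R R'] assms by (simp add: trace_mul_sym[of R] trace_mul_sym[of R'])

lemma matrix_diff_ldistrib: "(A :: real^'n^'m) ** (B - C) = A ** B - A ** C"
  by (vector matrix_matrix_mult_def sum_subtractf[symmetric] field_simps)

lemma matrix_diff_rdistrib: "((B :: real^'n^'m) - C) ** A = B ** A - C ** A"
  by (vector matrix_matrix_mult_def sum_subtractf[symmetric] field_simps)

lemma inverse_difference:
  fixes X Y Rx Ry :: "real^'n^'n"
  assumes "Rx ** X = mat 1" and "Y ** Ry = mat 1"
  shows "Rx - Ry = Rx ** (Y - X) ** Ry"
proof -
  have "Rx ** (Y - X) ** Ry = Rx ** (Y ** Ry) - (Rx ** X) ** Ry"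
    by (simp add: matrix_diff_ldistrib matrix_diff_rdistrib matrix_mul_assoc)
  then show ?thesis using assms by simp
qed

(* Inversion is antitone in the Loewner order: if 0 <= P <= Q then Q^-1 <= P^-1, because
   x.(P^-1 x) - x.(Q^-1 x) = (z-y).P(z-y) + y.(Q-P)y with y = Q^-1 x and z = P^-1 x. *)
lemma inverse_antitone:
  fixes P Q RP RQ :: "real^'n^'n"
  assumes "psd P" and le: "\<And>x. x \<bullet> (P *v x) \<le> x \<bullet> (Q *v x)"
    and "P ** RP = mat 1" and "Q ** RQ = mat 1"
  shows "x \<bullet> (RQ *v x) \<le> x \<bullet> (RP *v x)"
proof -
  define y where "y = RQ *v x"
  define z where "z = RP *v x"
  have Qy: "Q *v y = x" and Pz: "P *v z = x"
    using assms(3,4) by (simp_all add: y_def z_def matrix_vector_mul_assoc)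
  have symP: "transpose P = P" using assms(1) by (simp add: psd_def)
  have "x \<bullet> z - x \<bullet> y = (z - y) \<bullet> (P *v (z - y)) + (y \<bullet> (Q *v y) - y \<bullet> (P *v y))"
  proof -
    have "x \<bullet> y = y \<bullet> (Q *v y)" by (simp add: Qy inner_commute)
    moreover have "x \<bullet> y = z \<bullet> (P *v y)"
      using inner_symmetric_matrix[OF symP, of z y] by (simp add: Pz inner_commute)
    moreover have "x \<bullet> z = z \<bullet> (P *v z)" by (simp add: Pz inner_commute)
    moreover have "y \<bullet> (P *v z) = z \<bullet> (P *v y)"
      using inner_symmetric_matrix[OF symP, of y z] by (simp add: inner_commute)
    ultimately show ?thesis
      by (simp add: matrix_vector_mult_diff_distrib inner_diff_left inner_diff_right)
  qed
  moreover have "0 \<le> (z - y) \<bullet> (P *v (z - y))" using assms(1) by (simp add: psd_def)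
  moreover have "y \<bullet> (P *v y) \<le> y \<bullet> (Q *v y)" by (rule le)
  ultimately show ?thesis by (simp add: y_def z_def)
qed

definition resolvent :: "real \<Rightarrow> real^'n^'n \<Rightarrow> real^'n^'n" where
  "resolvent s X = mat_fun (\<lambda>t. 1 / (t + s)) X"

context
  fixes X :: "real^'n^'n" and s :: real
  assumes X: "psd X" and s: "0 < s"
begin

lemma resolvent_inverse:
  "resolvent s X ** (X + mat s) = mat 1" "(X + mat s) ** resolvent s X = mat 1"
proof -
  obtain U l where U: "orthogonal_matrix U" and l: "\<And>i. 0 \<le> l $ i"
    and XU: "X = spectral_fun U l (\<lambda>t. t)" and f: "\<And>f. mat_fun f X = spectral_fun U l f"
    using psd_spectral_decomposition[OF X] by metis
  have shift: "X + mat s = spectral_fun U l (\<lambda>t. t + s)"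
    by (simp add: XU spectral_fun_add spectral_fun_const[OF U])
  have "l $ i + s \<noteq> 0" for i using l[of i] s by linarith
  then have "spectral_fun U l (\<lambda>t. 1 / (t + s) * (t + s)) = mat 1"
    and "spectral_fun U l (\<lambda>t. (t + s) * (1 / (t + s))) = mat 1"
    by (simp_all add: spectral_fun_cong[where g = "\<lambda>t. 1"] spectral_fun_const[OF U])
  then show "resolvent s X ** (X + mat s) = mat 1" and "(X + mat s) ** resolvent s X = mat 1"
    by (simp_all add: resolvent_def f shift spectral_fun_mult[OF U])
qed

lemma resolvent_mult_self: "resolvent s X ** X = mat_fun (\<lambda>t. t / (t + s)) X"
proof -
  obtain U l where U: "orthogonal_matrix U"
    and XU: "X = spectral_fun U l (\<lambda>t. t)" and f: "\<And>f. mat_fun f X = spectral_fun U l f"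
    using psd_spectral_decomposition[OF X] by metis
  show ?thesis by (subst (2) XU) (simp add: resolvent_def f spectral_fun_mult[OF U])
qed

lemma resolvent_trace:
  "trace (mat_fun (\<lambda>t. t / (t + s)) X ** M) = trace M - s * trace (resolvent s X ** M)"
proof -
  obtain U l where U: "orthogonal_matrix U" and l: "\<And>i. 0 \<le> l $ i"
    and f: "\<And>f. mat_fun f X = spectral_fun U l f"
    using psd_spectral_decomposition[OF X] by metis
  have split: "l $ k / (l $ k + s) = 1 - s * (1 / (l $ k + s))" for k
    using l[of k] s by (simp add: field_simps)
  have "trace M = trace (spectral_fun U l (\<lambda>t. 1) ** M)" by (simp add: spectral_fun_const[OF U])
  then show ?thesis
    by (simp add: resolvent_def f spectral_fun_trace split left_diff_distrib sum_subtractf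
        sum_distrib_left mult.assoc)
qed

lemma resolvent_psd: "psd (resolvent s X)"
  unfolding resolvent_def using s by (intro mat_fun_psd[OF X]) simp

lemma resolvent_quadratic_bound: "s * (y \<bullet> (resolvent s X *v y)) \<le> y \<bullet> y"
proof -
  obtain U l where U: "orthogonal_matrix U" and l: "\<And>i. 0 \<le> l $ i"
    and f: "\<And>f. mat_fun f X = spectral_fun U l f"
    using psd_spectral_decomposition[OF X] by metis
  have "1 / (l $ k + s) \<le> 1 / s" for k using l[of k] s by (simp add: frac_le)
  then have "y \<bullet> (resolvent s X *v y) \<le> 1 / s * (y \<bullet> y)"
    unfolding resolvent_def f by (rule spectral_fun_quadratic_form_le[OF U])
  then show ?thesis using s by (simp add: field_simps)
qed

end

(* With R_X = (X + sI)^-1,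
   the claim reduces to s (tr(R_B A) - tr(R_(A+B) A)) <= tr(h_s(A) A), and
     s (tr(R_B A) - tr(R_(A+B) A)) = s tr(R_(A+B) A R_B A)   (resolvent identity)
                                   <= tr(R_(A+B) A^2)          (s R_B <= I)
                                   <= tr(R_A A^2) = tr(h_s(A) A)   (R_(A+B) <= R_A). *)
theorem resolvent_trace_inequality:
  fixes A B :: "real^'n^'n"
  assumes A: "psd A" and B: "psd B" and s: "0 < s"
  shows "trace (mat_fun (\<lambda>t. t / (t + s)) (A + B) ** A)
           \<le> trace (mat_fun (\<lambda>t. t / (t + s)) A ** A) + trace (mat_fun (\<lambda>t. t / (t + s)) B ** A)"
proof -
  have AB: "psd (A + B)" using A B by (rule psd_add)
  define RA RB RC where "RA = resolvent s A" and "RB = resolvent s B" and "RC = resolvent s (A + B)"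
  have symA: "transpose A = A" using A by (simp add: psd_def)
  have invB: "RB ** (B + mat s) = mat 1" unfolding RB_def by (rule resolvent_inverse(1)[OF B s])
  have invC: "(A + B + mat s) ** RC = mat 1" unfolding RC_def by (rule resolvent_inverse(2)[OF AB s])
  have "RB - RC = RB ** ((A + B + mat s) - (B + mat s)) ** RC"
    using invB invC by (rule inverse_difference)
  then have diff: "RB - RC = RB ** A ** RC" by (simp add: algebra_simps)
  have "s * (trace (RB ** A) - trace (RC ** A)) = s * trace (RC ** (A ** RB ** A))"
  proof -
    have "trace (RB ** A) - trace (RC ** A) = trace ((RB - RC) ** A)"
      by (simp add: trace_sub matrix_diff_rdistrib)
    also have "\<dots> = trace ((RB ** A) ** (RC ** A))" by (simp add: diff matrix_mul_assoc)
    also have "\<dots> = trace ((RC ** A) ** (RB ** A))" by (rule trace_mul_sym)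
    also have "\<dots> = trace (RC ** (A ** RB ** A))" by (simp add: matrix_mul_assoc)
    finally show ?thesis by simp
  qed
  also have "\<dots> \<le> trace (RC ** (A ** A))"
  proof (rule trace_mono_right)
    show "psd RC" unfolding RC_def using AB s by (rule resolvent_psd)
    show "s * (x \<bullet> ((A ** RB ** A) *v x)) \<le> x \<bullet> ((A ** A) *v x)" for x
      using resolvent_quadratic_bound[OF B s, of "A *v x"]
      by (simp add: RB_def matrix_vector_mul_assoc[symmetric] inner_symmetric_matrix[OF symA])
  qed
  also have "\<dots> \<le> trace (RA ** (A ** A))"
  proof (rule trace_mono_left[OF psd_square[OF A]])
    have shifted: "psd (A + mat s)" using A s by (simp add: psd_add psd_mat)
    show "x \<bullet> (RC *v x) \<le> x \<bullet> (RA *v x)" for x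
    proof (rule inverse_antitone[OF shifted])
      show "y \<bullet> ((A + mat s) *v y) \<le> y \<bullet> ((A + B + mat s) *v y)" for y
        using B by (simp add: psd_def algebra_simps matrix_vector_mult_add_rdistrib inner_add_right)
      show "(A + mat s) ** RA = mat 1" unfolding RA_def using A s by (rule resolvent_inverse(2))
      show "(A + B + mat s) ** RC = mat 1" unfolding RC_def using AB s by (rule resolvent_inverse(2))
    qed
  qed
  also have "\<dots> = trace (mat_fun (\<lambda>t. t / (t + s)) A ** A)"
    unfolding RA_def matrix_mul_assoc resolvent_mult_self[OF A s] ..
  finally show ?thesis
    using resolvent_trace[OF A s, of A] resolvent_trace[OF B s, of A] resolvent_trace[OF AB s, of A]
    unfolding RA_def RB_def RC_def by (simp add: right_diff_distrib)
qed

definition frac_weight :: "real \<Rightarrow> real \<Rightarrow> real" where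
  "frac_weight q s = indicator {0<..} s * s powr (q - 1)"

definition frac_power_const :: "real \<Rightarrow> ennreal" where
  "frac_power_const q = (\<integral>\<^sup>+ u. ennreal (frac_weight q u / (1 + u)) \<partial>lborel)"

lemma frac_weight_nonneg: "0 \<le> frac_weight q s"
  by (simp add: frac_weight_def)

(* The integral representation t^q = (1/K_q) int_0^oo s^(q-1) t/(t+s) ds, by substituting s = t u. *)
lemma powr_integral_representation:
  fixes q t :: real
  assumes "0 \<le> t"
  shows "(\<integral>\<^sup>+ s. ennreal (frac_weight q s * (t / (t + s))) \<partial>lborel) = frac_power_const q * ennreal (t powr q)"
proof (cases "t = 0")
  case False
  then have t: "0 < t" using assms by simp
  have scale: "ennreal (frac_weight q (t * u) * (t / (t + t * u)))
      = ennreal (t powr (q - 1)) * ennreal (frac_weight q u / (1 + u))" for u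
  proof (cases "0 < u")
    case True
    then have "0 < t + t * u" using t by (simp add: add_pos_pos)
    then have "t / (t + t * u) = 1 / (1 + u)" using t True by (simp add: field_simps)
    then have "frac_weight q (t * u) * (t / (t + t * u)) = t powr (q - 1) * (frac_weight q u / (1 + u))"
      using t True by (simp add: frac_weight_def powr_mult)
    then show ?thesis by (simp add: ennreal_mult'[symmetric] frac_weight_nonneg)
  next
    case False
    then show ?thesis using t by (simp add: frac_weight_def zero_less_mult_iff)
  qed
  have meas: "(\<lambda>s. ennreal (frac_weight q s * (t / (t + s)))) \<in> borel_measurable borel"
    unfolding frac_weight_def by measurable
  have "(\<integral>\<^sup>+ s. ennreal (frac_weight q s * (t / (t + s))) \<partial>lborel)
      = \<bar>t\<bar> * (\<integral>\<^sup>+ u. ennreal (frac_weight q (0 + t * u) * (t / (t + (0 + t * u)))) \<partial>lborel)"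
    by (rule nn_integral_real_affine[OF meas]) (use t in simp)
  also have "\<dots> = ennreal t * (\<integral>\<^sup>+ u. ennreal (frac_weight q (t * u) * (t / (t + t * u))) \<partial>lborel)"
    using t by simp
  also have "\<dots> = ennreal t * (ennreal (t powr (q - 1)) * frac_power_const q)"
    unfolding scale frac_power_const_def
    by (subst nn_integral_cmult) (auto simp: frac_weight_def)
  also have "\<dots> = frac_power_const q * ennreal (t powr q)"
  proof -
    have "t * t powr (q - 1) = t powr q" using t by (simp add: powr_mult_base)
    then have "ennreal t * ennreal (t powr (q - 1)) = ennreal (t powr q)"
      using t by (simp add: ennreal_mult[symmetric])
    then show ?thesis by (metis mult.assoc mult.commute)
  qed
  finally show ?thesis .
qed (simp add: frac_weight_def)

(* K_q is finite for 0 < q < 1: compare with u^(q-1) on (0,1] and u^(q-2) on [1,oo). *)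
lemma frac_power_const_finite:
  assumes q: "0 < q" "q < 1"
  shows "frac_power_const q < \<infinity>"
proof -
  define f1 where "f1 = (\<lambda>u::real. if u \<in> {0..1} then u powr (q - 1) else 0)"
  define f2 where "f2 = (\<lambda>u::real. if u \<in> {1..} then u powr (q - 2) else 0)"
  have m1: "f1 \<in> borel_measurable borel" and m2: "f2 \<in> borel_measurable borel"
    unfolding f1_def f2_def by measurable
  have "(f1 has_integral (1 powr (q - 1 + 1) / (q - 1 + 1))) UNIV"
    unfolding f1_def has_integral_restrict_UNIV using q by (intro has_integral_powr_from_0) auto
  then have i1: "integral\<^sup>N lborel f1 < \<infinity>"
    using nn_integral_has_integral_lborel[OF m1] by (simp add: f1_def)
  have "(f2 has_integral (- (1 powr (q - 2 + 1)) / (q - 2 + 1))) UNIV"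
    unfolding f2_def has_integral_restrict_UNIV using q by (intro has_integral_powr_to_inf) auto
  then have i2: "integral\<^sup>N lborel f2 < \<infinity>"
    using nn_integral_has_integral_lborel[OF m2] by (simp add: f2_def)
  have "frac_power_const q \<le> (\<integral>\<^sup>+ u. ennreal (f1 u) + ennreal (f2 u) \<partial>lborel)"
    unfolding frac_power_const_def
  proof (intro nn_integral_mono)
    fix u :: real
    show "ennreal (frac_weight q u / (1 + u)) \<le> ennreal (f1 u) + ennreal (f2 u)"
    proof (cases "0 < u")
      case True
      show ?thesis
      proof (cases "u \<le> 1")
        case True
        have "u powr (q - 1) / (1 + u) \<le> u powr (q - 1)" using \<open>0 < u\<close> by (simp add: divide_le_eq)
        then show ?thesis
          using \<open>0 < u\<close> True by (simp add: f1_def frac_weight_def add_increasing2)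
      next
        case False
        have "u powr (q - 1) / (1 + u) \<le> u powr (q - 1) / u" using \<open>0 < u\<close> by (intro divide_left_mono) auto
        also have "\<dots> = u powr (q - 2)" using powr_diff[of u "q - 1" 1] \<open>0 < u\<close> by simp
        finally show ?thesis
          using \<open>0 < u\<close> False by (simp add: f2_def frac_weight_def add_increasing)
      qed
    qed (simp add: frac_weight_def)
  qed
  also have "\<dots> = integral\<^sup>N lborel f1 + integral\<^sup>N lborel f2"
    by (rule nn_integral_add) (use m1 m2 in auto)
  also have "\<dots> < \<infinity>" using i1 i2 by simp
  finally show ?thesis .
qed

(* K_q > 0 for q > 0, by a lower bound on [1,2]. *)
lemma frac_power_const_nonzero:
  assumes "0 < q"
  shows "frac_power_const q \<noteq> 0"
proof -
  have "ennreal (1 / 6) * indicator {1..2} u \<le> ennreal (frac_weight q u / (1 + u))" for u :: real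
  proof (cases "u \<in> {1..2}")
    case True
    then have u: "1 \<le> u" "u \<le> 2" by auto
    have "1 / 2 \<le> u powr (-1)" using u by (simp add: powr_neg_one field_simps)
    also have "\<dots> \<le> u powr (q - 1)" using u assms by (intro powr_mono) auto
    finally have "(1 / 2) / 3 \<le> u powr (q - 1) / (1 + u)" using u by (intro frac_le) auto
    then show ?thesis using u True by (simp add: frac_weight_def)
  qed simp
  then have "(\<integral>\<^sup>+ u. ennreal (1 / 6) * indicator {1..2::real} u \<partial>lborel) \<le> frac_power_const q"
    unfolding frac_power_const_def by (intro nn_integral_mono)
  moreover have "(\<integral>\<^sup>+ u. ennreal (1 / 6) * indicator {1..2::real} u \<partial>lborel) = ennreal (1 / 6)"
    by (subst nn_integral_cmult_indicator) auto
  ultimately show ?thesis by auto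
qed

lemma powr_integral_representation_sum:
  fixes x g :: "'i \<Rightarrow> real"
  assumes x: "\<And>k. k \<in> I \<Longrightarrow> 0 \<le> x k" and g: "\<And>k. k \<in> I \<Longrightarrow> 0 \<le> g k"
  shows "(\<integral>\<^sup>+ s. ennreal (frac_weight q s * (\<Sum>k\<in>I. x k / (x k + s) * g k)) \<partial>lborel)
           = frac_power_const q * ennreal (\<Sum>k\<in>I. x k powr q * g k)"
proof -
  have split: "ennreal (frac_weight q s * (\<Sum>k\<in>I. x k / (x k + s) * g k))
      = (\<Sum>k\<in>I. ennreal (g k) * ennreal (frac_weight q s * (x k / (x k + s))))" for s
  proof (cases "0 < s")
    case True
    have nonneg: "0 \<le> g k * (frac_weight q s * (x k / (x k + s)))" if "k \<in> I" for k
      using True x[OF that] g[OF that] by (simp add: frac_weight_nonneg)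
    have "frac_weight q s * (\<Sum>k\<in>I. x k / (x k + s) * g k)
        = (\<Sum>k\<in>I. g k * (frac_weight q s * (x k / (x k + s))))"
      by (simp add: sum_distrib_left mult_ac)
    then have "ennreal (frac_weight q s * (\<Sum>k\<in>I. x k / (x k + s) * g k))
        = (\<Sum>k\<in>I. ennreal (g k * (frac_weight q s * (x k / (x k + s)))))"
      using nonneg by simp
    also have "\<dots> = (\<Sum>k\<in>I. ennreal (g k) * ennreal (frac_weight q s * (x k / (x k + s))))"
      using g by (intro sum.cong refl ennreal_mult')
    finally show ?thesis .
  qed (simp add: frac_weight_def)
  have "(\<integral>\<^sup>+ s. ennreal (frac_weight q s * (\<Sum>k\<in>I. x k / (x k + s) * g k)) \<partial>lborel)
      = (\<Sum>k\<in>I. ennreal (g k) * (\<integral>\<^sup>+ s. ennreal (frac_weight q s * (x k / (x k + s))) \<partial>lborel))"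
  proof -
    have "(\<integral>\<^sup>+ s. ennreal (frac_weight q s * (\<Sum>k\<in>I. x k / (x k + s) * g k)) \<partial>lborel)
        = (\<Sum>k\<in>I. \<integral>\<^sup>+ s. ennreal (g k) * ennreal (frac_weight q s * (x k / (x k + s))) \<partial>lborel)"
      unfolding split by (rule nn_integral_sum) (simp add: frac_weight_def)
    also have "\<dots> = (\<Sum>k\<in>I. ennreal (g k) * (\<integral>\<^sup>+ s. ennreal (frac_weight q s * (x k / (x k + s))) \<partial>lborel))"
      by (intro sum.cong refl nn_integral_cmult) (simp add: frac_weight_def)
    finally show ?thesis .
  qed
  also have "\<dots> = (\<Sum>k\<in>I. frac_power_const q * ennreal (x k powr q * g k))"
  proof (intro sum.cong refl)
    fix k assume "k \<in> I"
    then show "ennreal (g k) * (\<integral>\<^sup>+ s. ennreal (frac_weight q s * (x k / (x k + s))) \<partial>lborel)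
        = frac_power_const q * ennreal (x k powr q * g k)"
      unfolding powr_integral_representation[OF x[OF \<open>k \<in> I\<close>]]
      using g by (simp add: ennreal_mult'' mult_ac)
  qed
  also have "\<dots> = frac_power_const q * ennreal (\<Sum>k\<in>I. x k powr q * g k)"
    using g by (simp add: sum_distrib_left[symmetric])
  finally show ?thesis .
qed

lemma trace_mat_powr_integral:
  fixes X M :: "real^'n^'n"
  assumes "psd X" and "psd M"
  shows "(\<lambda>s. ennreal (frac_weight q s * trace (mat_fun (\<lambda>t. t / (t + s)) X ** M))) \<in> borel_measurable borel"
    and "(\<integral>\<^sup>+ s. ennreal (frac_weight q s * trace (mat_fun (\<lambda>t. t / (t + s)) X ** M)) \<partial>lborel)
           = frac_power_const q * ennreal (trace (mat_powr X q ** M))"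
proof -
  obtain l g :: "'n \<Rightarrow> real" where nonneg: "\<And>k. 0 \<le> l k \<and> 0 \<le> g k"
    and tr: "\<And>f. trace (mat_fun f X ** M) = (\<Sum>k\<in>UNIV. f (l k) * g k)"
    using trace_mat_fun_expansion[OF assms] by blast
  show "(\<lambda>s. ennreal (frac_weight q s * trace (mat_fun (\<lambda>t. t / (t + s)) X ** M))) \<in> borel_measurable borel"
    unfolding tr frac_weight_def by measurable
  show "(\<integral>\<^sup>+ s. ennreal (frac_weight q s * trace (mat_fun (\<lambda>t. t / (t + s)) X ** M)) \<partial>lborel)
      = frac_power_const q * ennreal (trace (mat_powr X q ** M))"
    unfolding tr mat_powr_eq_mat_fun using nonneg by (intro powr_integral_representation_sum) auto
qed

lemma weighted_resolvent_trace_inequality: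
  fixes A B :: "real^'n^'n"
  assumes A: "psd A" and B: "psd B"
  shows "ennreal (frac_weight q s * trace (mat_fun (\<lambda>t. t / (t + s)) (A + B) ** A))
           \<le> ennreal (frac_weight q s * trace (mat_fun (\<lambda>t. t / (t + s)) A ** A))
             + ennreal (frac_weight q s * trace (mat_fun (\<lambda>t. t / (t + s)) B ** A))"
proof (cases "0 < s")
  case True
  have "0 \<le> trace (mat_fun (\<lambda>t. t / (t + s)) X ** A)" if "psd X" for X
    using True that A by (intro trace_mat_fun_nonneg) auto
  then show ?thesis
    using resolvent_trace_inequality[OF A B True] A B frac_weight_nonneg[of q s]
    by (simp add: ennreal_plus[symmetric] mult_left_mono distrib_left[symmetric] ennreal_leI)
qed (simp add: frac_weight_def)

theorem mainTheorem19:
  fixes A B :: "real^'d^'d" and q :: real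
  assumes "0 < q" and "q < 1"
    and "psd A" and "psd B"
  shows "trace (mat_powr (A + B) q ** A)
           \<le> trace (mat_powr A (q + 1)) + trace (mat_powr B q ** A)"
proof -
  note q = assms(1,2) and A = assms(3) and B = assms(4)
  have AB: "psd (A + B)" using A B by (rule psd_add)
  have nonneg: "0 \<le> trace (mat_powr X q ** A)" if "psd X" for X
    unfolding mat_powr_eq_mat_fun using that A by (intro trace_mat_fun_nonneg) auto
  define T where "T X s = frac_weight q s * trace (mat_fun (\<lambda>t. t / (t + s)) X ** A)" for X s
  have "frac_power_const q * ennreal (trace (mat_powr (A + B) q ** A))
      = (\<integral>\<^sup>+ s. ennreal (T (A + B) s) \<partial>lborel)"
    unfolding T_def by (rule trace_mat_powr_integral(2)[OF AB A, symmetric])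
  also have "\<dots> \<le> (\<integral>\<^sup>+ s. ennreal (T A s) \<partial>lborel) + (\<integral>\<^sup>+ s. ennreal (T B s) \<partial>lborel)"
    unfolding T_def
    by (subst nn_integral_add[symmetric])
      (auto intro!: trace_mat_powr_integral(1) A B nn_integral_mono weighted_resolvent_trace_inequality)
  also have "\<dots> = frac_power_const q * ennreal (trace (mat_powr A q ** A) + trace (mat_powr B q ** A))"
    unfolding T_def trace_mat_powr_integral(2)[OF A A] trace_mat_powr_integral(2)[OF B A]
    using nonneg[OF A] nonneg[OF B] by (simp add: distrib_left)
  finally have "ennreal (trace (mat_powr (A + B) q ** A))
      \<le> ennreal (trace (mat_powr A q ** A) + trace (mat_powr B q ** A))"
    using frac_power_const_nonzero[OF q(1)] frac_power_const_finite[OF q]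
    by (subst (asm) ennreal_mult_le_mult_iff) auto
  then have "trace (mat_powr (A + B) q ** A) \<le> trace (mat_powr A q ** A) + trace (mat_powr B q ** A)"
    using nonneg[OF A] nonneg[OF B] by (simp del: ennreal_plus)
  then show ?thesis by (simp add: mat_powr_add_one[OF A])
qed

end
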